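(* (i) For every $L>0$, the map $\Delta\mapsto\mathrm P_\Delta(|\hat\tau_{\rm ST}-\tau|\le L(1+\gamma)^{-1/2}\sigma_0)$ is symmetric about $\Delta=0$ and monotonically decreasing in $|\Delta|$. (ii) For every $t\in\mathbb R$ and $L\ge0$, with $c=c_{\alpha/2}$, \begin{align*} G_{\rm ST}(t,L):={}&\mathrm P_{\Delta/\sigma_0=t}\big(|\hat\tau_{\rm ST}-\tau|\le L(1+\gamma)^{-1/2}\sigma_0\big)\\ ={}&\Big[\Phi\big(c-\sqrt{\tfrac{\gamma}{1+\gamma}}t\big)-\Phi\big(-c-\sqrt{\tfrac{\gamma}{1+\gamma}}t\big)\Big]\Big[\Phi\big(L-\tfrac{\gamma}{\sqrt{1+\gamma}}t\big)-\Phi\big(-L-\tfrac{\gamma}{\sqrt{1+\gamma}}t\big)\Big]\\ &+\int_{-\infty}^{-c-\sqrt{\frac{\gamma}{1+\gamma}}t}\big[\Phi(L+\sqrt\gamma(u+c))-\Phi(-L+\sqrt\gamma(u+c))\big]\phi(u)\,du\\ &+\int_{c-\sqrt{\frac{\gamma}{1+\gamma}}t}^{\infty}\big[\Phi(L+\sqrt\gamma(u-c))-\Phi(-L+\sqrt\gamma(u-c))\big]\phi(u)\,du. \end{align*} (iii) Fix $b\ge0$ and $\zeta\in(0,1)$, and let \[ \hat L_{\rm ST}=\inf\Big\{L\ge0:\inf_{\Delta:|\Delta/\sigma_0|\le b}\mathrm P_\Delta\big(|\hat\tau_{\rm ST}-\tau|\le L(1+\gamma)^{-1/2}\sigma_0\big)\ge1-\zeta\Big\}.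 \] Then $\hat L_{\rm ST}$ is the solution in $L$ of $G_{\rm ST}(b,L)=1-\zeta$. Hence $[\hat\tau_{\rm ST}\pm\hat L_{\rm ST}(1+\gamma)^{-1/2}\sigma_0]$ is the shortest symmetric interval centered at $\hat\tau_{\rm ST}$, with data-independent half-length, having coverage at least $1-\zeta$ uniformly over $|\Delta/\sigma_0|\le b$.
   Context: Let $\tau\in\mathbb R$ be an unknown parameter and $\Delta\in\mathbb R$ an unknown bias. Let $\sigma_0,\sigma_1>0$ be known. We observe independent random variables $\hat\tau_0\sim N(\tau,\sigma_0^2)$ and $\hat\tau_1\sim N(\tau+\Delta,\sigma_1^2)$. Define $\gamma=\sigma_0^2/\sigma_1^2$ and $\sigma=\sqrt{\sigma_0^2+\sigma_1^2}$. Write $\Phi$ and $\phi$ for the standard normal CDF and density. For $a\in(0,1)$, let $c_a=\Phi^{-1}(1-a)$. Fix a tuning level $\alpha\in(0,1)$. Let $\mathcal A=\{|\hat\tau_1-\hat\tau_0|\le\sigma c_{\alpha/2}\}$. The soft-thresholding estimator is \[ \hat\tau_{\rm ST}=\hat\tau_0+\frac{\gamma}{1+\gamma}(\hat\tau_1-\hat\tau_0)\mathbf 1(\mathcal A)+\frac{\gamma}{1+\gamma}\sigma c_{\alpha/2}\,\mathrm{sign}(\hat\tau_1-\hat\tau_0)\mathbf 1(\mathcal A^c). \] $\mathrm P_\Delta$ denotes probability under bias $\Delta$, and $\mathrm P_{\Delta/\sigma_0=t}$ means probability under $\Delta=t\sigma_0$. These probabilities do not depend on $\tau$. *)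

theory Defs
  imports "HOL-Probability.Probability"
begin

definition Phi_std :: "real \<Rightarrow> real" where
  "Phi_std x = measure (density lborel std_normal_density) {..x}"

definition phi_std :: "real \<Rightarrow> real" where
  "phi_std x = std_normal_density x"

definition crit :: "real \<Rightarrow> real" where
  "crit a = (THE x. Phi_std x = 1 - a)"

definition gam :: "real \<Rightarrow> real \<Rightarrow> real" where
  "gam s0 s1 = s0^2 / s1^2"

definition sig :: "real \<Rightarrow> real \<Rightarrow> real" where
  "sig s0 s1 = sqrt (s0^2 + s1^2)"

text \<open>Soft-thresholding estimator as a function of the observations (x0,x1) = (tau0hat, tau1hat).\<close>
definition tau_ST :: "real \<Rightarrow> real \<Rightarrow> real \<Rightarrow> real \<Rightarrow> real \<Rightarrow> real" where
  "tau_ST s0 s1 \<alpha> x0 x1 =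
     (let g = gam s0 s1; c = crit (\<alpha>/2); s = sig s0 s1; d = x1 - x0 in
      x0 + g/(1+g) * d * (if \<bar>d\<bar> \<le> s * c then 1 else 0)
         + g/(1+g) * s * c * sgn d * (if \<bar>d\<bar> \<le> s * c then 0 else 1))"

definition obs_law :: "real \<Rightarrow> real \<Rightarrow> real \<Rightarrow> real \<Rightarrow> (real \<times> real) measure" where
  "obs_law s0 s1 \<tau> \<Delta> =
     density (lborel \<Otimes>\<^sub>M lborel)
       (\<lambda>(x0, x1). ennreal (normal_density \<tau> s0 x0 * normal_density (\<tau> + \<Delta>) s1 x1))"

definition cov_ST :: "real \<Rightarrow> real \<Rightarrow> real \<Rightarrow> real \<Rightarrow> real \<Rightarrow> real \<Rightarrow> real" where
  "cov_ST s0 s1 \<alpha> \<tau> \<Delta> L =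
     measure (obs_law s0 s1 \<tau> \<Delta>)
       {(x0, x1). \<bar>tau_ST s0 s1 \<alpha> x0 x1 - \<tau>\<bar> \<le> L * (1 + gam s0 s1) powr (-1/2) * s0}"

end

theory Submission
  imports Defs
begin

text \<open>Write \<open>d = x1 - x0\<close>. The joint density of the observations factors into the
  \<open>N(\<Delta>, \<sigma>\<^sup>2)\<close> density of \<open>d\<close> and the density of \<open>x0\<close> given \<open>d\<close>, which is normal
  with standard deviation \<open>\<sigma>0 / sqrt (1 + \<gamma>)\<close>; and the estimator is \<open>x0 + \<gamma> / (1 + \<gamma>) \<cdot> clip(d)\<close>,
  with \<open>clip\<close> the truncation to \<open>[-\<sigma> c, \<sigma> c]\<close>. Hence the coverage probability is the
  \<open>N(\<Delta>, \<sigma>\<^sup>2)\<close>-average over \<open>d\<close> of a band probability \<open>P(|Z + m(d)| \<le> L)\<close>, and (ii) is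
  this average split at the thresholds \<open>\<plusminus>\<sigma> c\<close>.

  The band probability is even in \<open>m\<close> and decreasing in \<open>|m|\<close>. Reflecting the two clipped
  regions turns the average into an integral against the normal densities centred at \<open>\<plusminus>\<sigma> c\<close>
  whose integrand decreases pointwise in \<open>\<Delta> \<ge> 0\<close>, since the density centred at \<open>\<sigma> c\<close>
  dominates the one centred at \<open>-\<sigma> c\<close> on \<open>[0, \<infinity>)\<close>; this gives (i).

  By (i) the worst case over \<open>|\<Delta>| \<le> b \<sigma>0\<close> is \<open>\<Delta> = b \<sigma>0\<close>, where the coverage is continuous and
  strictly increasing in \<open>L\<close>, from \<open>0\<close> to \<open>1\<close>; so the infimum in (iii) is the unique root of
  \<open>G(b, L) = 1 - \<zeta>\<close>.\<close>

section \<open>The standard normal distribution\<close>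

abbreviation std_normal :: "real measure" where
  "std_normal \<equiv> density lborel std_normal_density"

interpretation std_normal: real_distribution std_normal
  by (simp add: real_distribution_def real_distribution_axioms_def prob_space_normal_density)

lemma Phi_std_eq_cdf: "Phi_std = cdf std_normal"
  by (auto simp: Phi_std_def cdf_def2 fun_eq_iff)

lemma measure_std_normal_singleton: "measure std_normal {x} = 0"
  by (simp add: measure_def emeasure_density AE_lborel_singleton nn_integral_0_iff_AE)

lemma Phi_std_mono: "x \<le> y \<Longrightarrow> Phi_std x \<le> Phi_std y"
  by (simp add: Phi_std_eq_cdf std_normal.cdf_nondecreasing)

lemma isCont_Phi_std: "isCont Phi_std x"
  by (simp add: Phi_std_eq_cdf std_normal.isCont_cdf measure_std_normal_singleton)

lemma Phi_std_nonneg: "0 \<le> Phi_std x"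
  by (simp add: Phi_std_def)

lemma Phi_std_le_1: "Phi_std x \<le> 1"
  by (simp add: Phi_std_eq_cdf std_normal.cdf_bounded_prob)

lemma Phi_std_at_top: "(Phi_std \<longlongrightarrow> 1) at_top"
  by (simp add: Phi_std_eq_cdf std_normal.cdf_lim_at_top_prob)

lemma Phi_std_at_bot: "(Phi_std \<longlongrightarrow> 0) at_bot"
  by (simp add: Phi_std_eq_cdf std_normal.cdf_lim_at_bot)

lemma Phi_std_measurable [measurable]: "Phi_std \<in> borel_measurable borel"
  by (rule borel_measurable_mono) (auto simp: mono_def Phi_std_mono)

lemma Phi_std_minus: "Phi_std (- x) = 1 - Phi_std x"
proof -
  have "emeasure std_normal {..-x} =
      (\<integral>\<^sup>+t. ennreal (std_normal_density (- t)) * indicator {..-x} (- t) \<partial>lborel)"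
    using nn_integral_real_affine[where c="-1" and t=0,
        of "\<lambda>t. ennreal (std_normal_density t) * indicator {..-x} t"]
    by (simp add: emeasure_density)
  also have "\<dots> = emeasure std_normal {x..}"
    by (auto simp: emeasure_density std_normal_density_def intro!: nn_integral_cong split: split_indicator)
  finally have "measure std_normal {..-x} = measure std_normal {x..}"
    by (simp add: std_normal.emeasure_eq_measure)
  also have "\<dots> = 1 - measure std_normal {..<x}"
    using std_normal.prob_compl[of "{..<x}"] by (simp add: Compl_eq_Diff_UNIV[symmetric] not_less)
  also have "{..<x} = {..x} - {x}"
    by auto
  finally show ?thesis
    by (simp add: Phi_std_def std_normal.finite_measure_Diff measure_std_normal_singleton)
qed

lemma Phi_std_zero: "Phi_std 0 = 1/2"
  using Phi_std_minus[of 0] by simp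

lemma Phi_std_diff_eq_nn_integral:
  assumes "x \<le> y"
  shows "ennreal (Phi_std y - Phi_std x) =
    (\<integral>\<^sup>+t. ennreal (std_normal_density t) * indicator {x..y} t \<partial>lborel)"
proof -
  have "Phi_std y - Phi_std x = measure std_normal {x<..y}"
    using std_normal.cdf_diff_eq[of x y] assms by (cases "x = y") (auto simp: Phi_std_eq_cdf)
  then have "ennreal (Phi_std y - Phi_std x) =
      (\<integral>\<^sup>+t. ennreal (std_normal_density t) * indicator {x<..y} t \<partial>lborel)"
    by (simp add: std_normal.emeasure_eq_measure[symmetric] emeasure_density)
  also have "\<dots> = (\<integral>\<^sup>+t. ennreal (std_normal_density t) * indicator {x..y} t \<partial>lborel)"
    by (rule nn_integral_cong_AE) (use AE_lborel_singleton[of x] in \<open>auto split: split_indicator\<close>)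
  finally show ?thesis .
qed

lemma std_normal_density_le_1: "std_normal_density t \<le> 1"
proof -
  have "1 / sqrt (2 * pi) \<le> 1"
    using pi_gt3 by (simp add: divide_le_eq_1 real_le_rsqrt)
  then show ?thesis
    unfolding std_normal_density_def by (intro mult_le_one) auto
qed

lemma normal_density_antimono:
  "(x - \<mu>)\<^sup>2 \<le> (y - \<nu>)\<^sup>2 \<Longrightarrow> normal_density \<nu> \<sigma> y \<le> normal_density \<mu> \<sigma> x"
  unfolding normal_density_def by (intro mult_left_mono) (auto intro!: divide_right_mono)

lemma Phi_std_diff_le:
  assumes "x \<le> y"
  shows "Phi_std y - Phi_std x \<le> y - x"
proof -
  have "ennreal (Phi_std y - Phi_std x) \<le> (\<integral>\<^sup>+t. indicator {x..y} t \<partial>lborel)"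
    unfolding Phi_std_diff_eq_nn_integral[OF assms]
    by (intro nn_integral_mono) (auto split: split_indicator simp: std_normal_density_le_1)
  then show ?thesis
    using assms by (simp add: ennreal_le_iff)
qed

lemma Phi_std_strict_mono:
  assumes "x < y"
  shows "Phi_std x < Phi_std y"
proof -
  define M where "M = max \<bar>x\<bar> \<bar>y\<bar>"
  have "ennreal (std_normal_density M * (y - x)) =
      (\<integral>\<^sup>+t. ennreal (std_normal_density M) * indicator {x..y} t \<partial>lborel)"
    using assms by (subst nn_integral_cmult_indicator) (auto simp: ennreal_mult)
  also have "\<dots> \<le> ennreal (Phi_std y - Phi_std x)"
    unfolding Phi_std_diff_eq_nn_integral[OF less_imp_le[OF assms]]
    by (intro nn_integral_mono)
      (auto split: split_indicator intro!: normal_density_antimono simp: abs_le_square_iff[symmetric] M_def)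
  finally have "std_normal_density M * (y - x) \<le> Phi_std y - Phi_std x"
    using assms Phi_std_mono[of x y] by (simp add: ennreal_le_iff)
  moreover have "0 < std_normal_density M * (y - x)"
    using assms by (simp add: normal_density_pos)
  ultimately show ?thesis
    by simp
qed

lemma Phi_std_crit:
  assumes "0 < a" "a < 1"
  shows "Phi_std (crit a) = 1 - a"
proof -
  obtain X where X: "\<And>x. x \<ge> X \<Longrightarrow> 1 - a < Phi_std x"
    using order_tendstoD(1)[OF Phi_std_at_top, of "1 - a"] assms
    by (auto simp: eventually_at_top_linorder)
  obtain Y where Y: "\<And>x. x \<le> Y \<Longrightarrow> Phi_std x < 1 - a"
    using order_tendstoD(2)[OF Phi_std_at_bot, of "1 - a"] assms
    by (auto simp: eventually_at_bot_linorder)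
  obtain x where x: "Phi_std x = 1 - a"
    using IVT[of Phi_std "min X Y" "1 - a" X] X[of X] Y[of "min X Y"] isCont_Phi_std
    by (auto simp: less_imp_le)
  have "Phi_std y = 1 - a \<longleftrightarrow> y = x" for y
    using Phi_std_strict_mono[of x y] Phi_std_strict_mono[of y x] x by (cases x y rule: linorder_cases) auto
  then have "crit a = x"
    unfolding crit_def by blast
  with x show ?thesis
    by simp
qed

lemma crit_pos:
  assumes "0 < a" "a < 1/2"
  shows "0 < crit a"
  using Phi_std_crit[of a] Phi_std_mono[of "crit a" 0] Phi_std_zero assms by (cases "0 < crit a") auto

lemma normal_density_affine_std:
  assumes "\<sigma> > 0"
  shows "normal_density \<mu> \<sigma> (\<mu> + \<sigma> * x) = std_normal_density x / \<sigma>"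
proof -
  have "sqrt (2 * pi * \<sigma>\<^sup>2) = sqrt (2 * pi) * \<sigma>"
    using assms by (simp add: real_sqrt_mult)
  moreover have "(\<sigma> * x)\<^sup>2 / (2 * \<sigma>\<^sup>2) = x\<^sup>2 / 2"
    using assms by (simp add: power_mult_distrib)
  ultimately show ?thesis
    unfolding normal_density_def std_normal_density_def by simp
qed

lemma normal_density_reflect: "normal_density \<mu> \<sigma> (a - x) = normal_density (a - \<mu>) \<sigma> x"
  unfolding normal_density_def by (simp add: power2_commute algebra_simps)

lemma nn_integral_normal_density_interval:
  assumes "\<sigma> > 0" "a \<le> b"
  shows "(\<integral>\<^sup>+t. ennreal (normal_density \<mu> \<sigma> t) * indicator {a..b} t \<partial>lborel) =
    ennreal (Phi_std ((b - \<mu>) / \<sigma>) - Phi_std ((a - \<mu>) / \<sigma>))"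
proof -
  have "(\<integral>\<^sup>+t. ennreal (normal_density \<mu> \<sigma> t) * indicator {a..b} t \<partial>lborel) =
      (\<integral>\<^sup>+x. ennreal \<sigma> * (ennreal (normal_density \<mu> \<sigma> (\<mu> + \<sigma> * x)) * indicator {a..b} (\<mu> + \<sigma> * x)) \<partial>lborel)"
    using assms by (subst nn_integral_real_affine[where c=\<sigma> and t=\<mu>]) (auto simp: nn_integral_cmult)
  also have "\<dots> = (\<integral>\<^sup>+x. ennreal (std_normal_density x) * indicator {(a - \<mu>) / \<sigma>..(b - \<mu>) / \<sigma>} x \<partial>lborel)"
  proof (intro nn_integral_cong)
    fix x
    have "ennreal \<sigma> * ennreal (normal_density \<mu> \<sigma> (\<mu> + \<sigma> * x)) = ennreal (std_normal_density x)"
      using assms by (simp add: normal_density_affine_std ennreal_mult[symmetric])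
    moreover have "\<mu> + \<sigma> * x \<in> {a..b} \<longleftrightarrow> x \<in> {(a - \<mu>) / \<sigma>..(b - \<mu>) / \<sigma>}"
      using assms by (auto simp: field_simps)
    ultimately show "ennreal \<sigma> * (ennreal (normal_density \<mu> \<sigma> (\<mu> + \<sigma> * x)) * indicator {a..b} (\<mu> + \<sigma> * x)) =
        ennreal (std_normal_density x) * indicator {(a - \<mu>) / \<sigma>..(b - \<mu>) / \<sigma>} x"
      by (simp add: indicator_def mult.assoc[symmetric])
  qed
  also have "\<dots> = ennreal (Phi_std ((b - \<mu>) / \<sigma>) - Phi_std ((a - \<mu>) / \<sigma>))"
    using assms by (intro Phi_std_diff_eq_nn_integral[symmetric] divide_right_mono) auto
  finally show ?thesis .
qed

lemma integral_normal_density_interval: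
  assumes "\<sigma> > 0" "a \<le> b"
  shows "(\<integral>t. normal_density \<mu> \<sigma> t * indicator {a..b} t \<partial>lborel) =
    Phi_std ((b - \<mu>) / \<sigma>) - Phi_std ((a - \<mu>) / \<sigma>)"
proof -
  have "ennreal (\<integral>t. normal_density \<mu> \<sigma> t * indicator {a..b} t \<partial>lborel) =
      (\<integral>\<^sup>+t. ennreal (normal_density \<mu> \<sigma> t) * indicator {a..b} t \<partial>lborel)"
    using assms by (subst nn_integral_eq_integral[symmetric])
      (auto intro!: nn_integral_cong integrable_real_mult_indicator split: split_indicator)
  then show ?thesis
    using assms Phi_std_mono[of "(a - \<mu>) / \<sigma>" "(b - \<mu>) / \<sigma>"]
    by (subst (asm) nn_integral_normal_density_interval)
      (auto simp: divide_right_mono integral_nonneg_AE)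
qed

lemma integrable_normal_density_mult_bounded:
  fixes f :: "real \<Rightarrow> real"
  assumes "0 < \<sigma>" and [measurable]: "f \<in> borel_measurable borel" and "\<And>x. \<bar>f x\<bar> \<le> B"
  shows "integrable lborel (\<lambda>x. normal_density \<mu> \<sigma> x * f x)"
proof (rule Bochner_Integration.integrable_bound)
  show "integrable lborel (\<lambda>x. B * normal_density \<mu> \<sigma> x)"
    using assms(1) by simp
  have "norm (normal_density \<mu> \<sigma> x * f x) \<le> norm (B * normal_density \<mu> \<sigma> x)" for x
  proof -
    have "norm (normal_density \<mu> \<sigma> x * f x) = normal_density \<mu> \<sigma> x * \<bar>f x\<bar>"
      by (simp add: abs_mult)
    also have "\<dots> \<le> normal_density \<mu> \<sigma> x * B"
      by (intro mult_left_mono assms(3)) simp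
    also have "\<dots> \<le> norm (B * normal_density \<mu> \<sigma> x)"
      by (simp add: abs_mult mult.commute mult_right_mono)
    finally show ?thesis .
  qed
  then show "AE x in lborel. norm (normal_density \<mu> \<sigma> x * f x) \<le> norm (B * normal_density \<mu> \<sigma> x)"
    by simp
qed measurable

section \<open>Band probabilities\<close>

text \<open>\<open>band_prob L m\<close> is the probability that \<open>|Z + m| \<le> L\<close> for a standard normal \<open>Z\<close>.\<close>
definition band_prob :: "real \<Rightarrow> real \<Rightarrow> real" where
  "band_prob L m = Phi_std (L - m) - Phi_std (- L - m)"

lemma band_prob_measurable [measurable]: "band_prob L \<in> borel_measurable borel"
  unfolding band_prob_def[abs_def] by measurable

lemma band_prob_nonneg: "0 \<le> L \<Longrightarrow> 0 \<le> band_prob L m"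
  unfolding band_prob_def using Phi_std_mono[of "- L - m" "L - m"] by simp

lemma abs_band_prob_le_1: "\<bar>band_prob L m\<bar> \<le> 1"
  unfolding band_prob_def abs_le_iff
  using Phi_std_nonneg[of "L - m"] Phi_std_le_1[of "L - m"]
    Phi_std_nonneg[of "- L - m"] Phi_std_le_1[of "- L - m"]
  by linarith

lemma band_prob_zero: "band_prob 0 m = 0"
  by (simp add: band_prob_def)

lemma band_prob_minus: "band_prob L (- m) = band_prob L m"
  unfolding band_prob_def using Phi_std_minus[of "L + m"] Phi_std_minus[of "- L + m"]
  by (simp add: algebra_simps)

text \<open>The lower tail interval \<open>[-L - m2, -L - m1]\<close> is the upper one \<open>[L - m2, L - m1]\<close> shifted
  by \<open>-2L\<close>, i.e. moved further away from the origin, so it carries less normal mass.\<close>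
lemma band_prob_antimono:
  assumes L: "0 \<le> L" and m: "0 \<le> m1" "m1 \<le> m2"
  shows "band_prob L m2 \<le> band_prob L m1"
proof -
  have "ennreal (Phi_std (- L - m1) - Phi_std (- L - m2)) =
      (\<integral>\<^sup>+t. ennreal (std_normal_density t) * indicator {- L - m2..- L - m1} t \<partial>lborel)"
    using m by (intro Phi_std_diff_eq_nn_integral) simp
  also have "\<dots> = (\<integral>\<^sup>+u. ennreal (std_normal_density (u - 2 * L)) * indicator {L - m2..L - m1} u \<partial>lborel)"
    by (subst nn_integral_real_affine[where c=1 and t="- 2 * L"])
      (auto intro!: nn_integral_cong simp: indicator_def)
  also have "\<dots> \<le> (\<integral>\<^sup>+u. ennreal (std_normal_density u) * indicator {L - m2..L - m1} u \<partial>lborel)"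
    using L m
    by (intro nn_integral_mono)
      (auto split: split_indicator intro!: normal_density_antimono simp: abs_le_square_iff[symmetric])
  also have "\<dots> = ennreal (Phi_std (L - m1) - Phi_std (L - m2))"
    using m by (intro Phi_std_diff_eq_nn_integral[symmetric]) simp
  finally show ?thesis
    unfolding band_prob_def using Phi_std_mono[of "L - m2" "L - m1"] m by (simp add: ennreal_le_iff)
qed

lemma band_prob_strict_mono: "L1 < L2 \<Longrightarrow> band_prob L1 m < band_prob L2 m"
  unfolding band_prob_def
  using Phi_std_strict_mono[of "L1 - m" "L2 - m"] Phi_std_strict_mono[of "- L2 - m" "- L1 - m"] by simp

lemma band_prob_lipschitz: "\<bar>band_prob L2 m - band_prob L1 m\<bar> \<le> 2 * \<bar>L2 - L1\<bar>"
proof -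
  have Phi_lipschitz: "\<bar>Phi_std x - Phi_std y\<bar> \<le> \<bar>x - y\<bar>" for x y
    using Phi_std_diff_le[of x y] Phi_std_diff_le[of y x] Phi_std_mono[of x y] Phi_std_mono[of y x]
    by (cases "x \<le> y") auto
  have "\<bar>Phi_std (L2 - m) - Phi_std (L1 - m)\<bar> \<le> \<bar>L2 - L1\<bar>"
    "\<bar>Phi_std (- L2 - m) - Phi_std (- L1 - m)\<bar> \<le> \<bar>L2 - L1\<bar>"
    using Phi_lipschitz[of "L2 - m" "L1 - m"] Phi_lipschitz[of "- L2 - m" "- L1 - m"]
    by (simp_all add: abs_minus_commute)
  then show ?thesis
    unfolding band_prob_def by (simp add: abs_le_iff)
qed

lemma band_prob_tendsto_1: "((\<lambda>L. band_prob L m) \<longlongrightarrow> 1) at_top"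
proof -
  have shift: "filterlim (\<lambda>L. L + c) at_top at_top" for c :: real
    using filterlim_tendsto_add_at_top[OF tendsto_const[of c] filterlim_ident] by (simp add: add.commute)
  have "((\<lambda>L. Phi_std (L - m)) \<longlongrightarrow> 1) at_top"
    using filterlim_compose[OF Phi_std_at_top shift[of "- m"]] by simp
  moreover have "((\<lambda>L. Phi_std (- L - m)) \<longlongrightarrow> 0) at_top"
    using filterlim_compose[OF Phi_std_at_bot shift[of m, unfolded filterlim_uminus_at_top]] by simp
  ultimately show ?thesis
    unfolding band_prob_def using tendsto_diff by fastforce
qed

lemma nn_integral_normal_density_band:
  assumes "\<sigma> > 0" "0 \<le> L"
  shows "(\<integral>\<^sup>+x. ennreal (normal_density \<mu> \<sigma> x) * indicator {t - L * \<sigma>..t + L * \<sigma>} x \<partial>lborel) =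
    ennreal (band_prob L ((\<mu> - t) / \<sigma>))"
proof -
  have "(t + L * \<sigma> - \<mu>) / \<sigma> = L - (\<mu> - t) / \<sigma>" "(t - L * \<sigma> - \<mu>) / \<sigma> = - L - (\<mu> - t) / \<sigma>"
    using assms by (simp_all add: field_simps)
  then show ?thesis
    using assms by (simp add: nn_integral_normal_density_interval band_prob_def)
qed

lemma integrable_normal_density_band_prob:
  assumes "0 < \<sigma>" "f \<in> borel_measurable borel"
  shows "integrable lborel (\<lambda>d. normal_density \<mu> \<sigma> d * band_prob L (f d))"
  using assms by (intro integrable_normal_density_mult_bounded[where B=1] abs_band_prob_le_1) auto

lemma integral_normal_density_band_prob_diff:
  assumes "0 < \<sigma>" "f \<in> borel_measurable borel"
  shows "(\<integral>d. normal_density \<mu> \<sigma> d * band_prob L2 (f d) \<partial>lborel) -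
      (\<integral>d. normal_density \<mu> \<sigma> d * band_prob L1 (f d) \<partial>lborel) =
    (\<integral>d. normal_density \<mu> \<sigma> d * (band_prob L2 (f d) - band_prob L1 (f d)) \<partial>lborel)"
  using integrable_normal_density_band_prob[OF assms] by (simp add: right_diff_distrib)

lemma integral_normal_density_band_prob_strict_mono:
  assumes \<sigma>: "0 < \<sigma>" and f: "f \<in> borel_measurable borel" and "L1 < L2"
  shows "(\<integral>d. normal_density \<mu> \<sigma> d * band_prob L1 (f d) \<partial>lborel) <
    (\<integral>d. normal_density \<mu> \<sigma> d * band_prob L2 (f d) \<partial>lborel)"
proof -
  define g where "g d = normal_density \<mu> \<sigma> d * (band_prob L2 (f d) - band_prob L1 (f d))" for d
  have g_pos: "0 < g d" for d
    using \<sigma> band_prob_strict_mono[OF \<open>L1 < L2\<close>] by (simp add: g_def normal_density_pos)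
  then have g_ne_0: "g d \<noteq> 0" for d
    by (metis less_irrefl)
  have "integrable lborel g"
    unfolding g_def using integrable_normal_density_band_prob[OF \<sigma> f]
    by (simp add: right_diff_distrib)
  moreover have "\<not> (AE d in lborel. g d = 0)"
    using ae_filter_eq_bot_iff[of lborel] by (simp add: g_ne_0 trivial_limit_def[symmetric])
  ultimately have "(\<integral>d. g d \<partial>lborel) \<noteq> 0"
    using g_pos by (subst integral_nonneg_eq_0_iff_AE) (auto simp: less_imp_le)
  moreover have "0 \<le> (\<integral>d. g d \<partial>lborel)"
    using g_pos by (simp add: less_imp_le)
  ultimately show ?thesis
    using integral_normal_density_band_prob_diff[OF \<sigma> f, of \<mu> L2 L1] by (simp add: g_def)
qed

lemma continuous_on_integral_normal_density_band_prob:
  assumes \<sigma>: "0 < \<sigma>" and f: "f \<in> borel_measurable borel"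
  shows "continuous_on A (\<lambda>L. \<integral>d. normal_density \<mu> \<sigma> d * band_prob L (f d) \<partial>lborel)"
proof (rule lipschitz_on_continuous_on)
  have "\<bar>(\<integral>d. normal_density \<mu> \<sigma> d * band_prob L2 (f d) \<partial>lborel) -
      (\<integral>d. normal_density \<mu> \<sigma> d * band_prob L1 (f d) \<partial>lborel)\<bar> \<le> 2 * \<bar>L2 - L1\<bar>" for L1 L2
  proof -
    have "\<bar>\<integral>d. normal_density \<mu> \<sigma> d * (band_prob L2 (f d) - band_prob L1 (f d)) \<partial>lborel\<bar> \<le>
        (\<integral>d. normal_density \<mu> \<sigma> d * (2 * \<bar>L2 - L1\<bar>) \<partial>lborel)"
    proof (rule integral_abs_bound_integral)
      show "integrable lborel (\<lambda>d. normal_density \<mu> \<sigma> d * (band_prob L2 (f d) - band_prob L1 (f d)))"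
        unfolding right_diff_distrib
        by (intro Bochner_Integration.integrable_diff integrable_normal_density_band_prob[OF \<sigma> f])
    qed (use \<sigma> in \<open>auto simp: abs_mult intro!: mult_left_mono band_prob_lipschitz\<close>)
    then show ?thesis
      using \<sigma> by (simp add: integral_normal_density_band_prob_diff[OF \<sigma> f])
  qed
  then show "2-lipschitz_on A (\<lambda>L. \<integral>d. normal_density \<mu> \<sigma> d * band_prob L (f d) \<partial>lborel)"
    by (intro lipschitz_onI) (auto simp: dist_real_def)
qed

lemma integral_normal_density_band_prob_tendsto_1:
  assumes \<sigma>: "0 < \<sigma>" and [measurable]: "f \<in> borel_measurable borel"
  shows "((\<lambda>L. \<integral>d. normal_density \<mu> \<sigma> d * band_prob L (f d) \<partial>lborel) \<longlongrightarrow> 1) at_top"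
proof -
  have "((\<lambda>L. \<integral>d. normal_density \<mu> \<sigma> d * band_prob L (f d) \<partial>lborel) \<longlongrightarrow>
      (\<integral>d. normal_density \<mu> \<sigma> d \<partial>lborel)) at_top"
  proof (rule integral_dominated_convergence_at_top[where w="normal_density \<mu> \<sigma>"])
    show "AE d in lborel. ((\<lambda>L. normal_density \<mu> \<sigma> d * band_prob L (f d)) \<longlongrightarrow> normal_density \<mu> \<sigma> d) at_top"
      using tendsto_mult[OF tendsto_const band_prob_tendsto_1] by (intro AE_I2) fastforce
    show "\<forall>\<^sub>F L in at_top. AE d in lborel.
        norm (normal_density \<mu> \<sigma> d * band_prob L (f d)) \<le> normal_density \<mu> \<sigma> d"
      using abs_band_prob_le_1 by (intro always_eventually AE_I2) (simp add: abs_mult mult_left_le)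
  qed (use \<sigma> in auto)
  then show ?thesis
    using \<sigma> by simp
qed

section \<open>Normal averages along a clipped shift\<close>

definition clip :: "real \<Rightarrow> real \<Rightarrow> real" where
  "clip k d = max (- k) (min k d)"

lemma clip_measurable [measurable]: "clip k \<in> borel_measurable borel"
  unfolding clip_def[abs_def] by measurable

lemma clip_minus: "0 \<le> k \<Longrightarrow> clip k (- d) = - clip k d"
  by (auto simp: clip_def)

lemma clip_split:
  fixes E :: "real \<Rightarrow> real"
  assumes "0 \<le> k"
  shows "E (\<Delta> - d + clip k d) = E (min (\<Delta> + k - d) \<Delta>) + E (max (\<Delta> - d - k) \<Delta>) - E \<Delta>"
  using assms by (cases "d < - k"; cases "k < d") (auto simp: clip_def min_def max_def algebra_simps)

lemma integral_reflect_lborel: "(\<integral>x. f x \<partial>lborel) = (\<integral>x. f (a - x) \<partial>lborel)"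
  for f :: "real \<Rightarrow> real"
  using lborel_integral_real_affine[of "-1" f a] by simp

lemma integral_normal_clip_minus:
  fixes E :: "real \<Rightarrow> real"
  assumes "0 \<le> k" and "\<And>x. E (- x) = E x"
  shows "(\<integral>d. normal_density (- \<Delta>) s d * E (- \<Delta> - d + clip k d) \<partial>lborel) =
    (\<integral>d. normal_density \<Delta> s d * E (\<Delta> - d + clip k d) \<partial>lborel)"
proof -
  have "E (- \<Delta> - (0 - d) + clip k (0 - d)) = E (\<Delta> - d + clip k d)" for d
    using assms(2)[of "\<Delta> - d + clip k d"] by (simp add: clip_minus[OF assms(1)] algebra_simps)
  then show ?thesis
    by (subst integral_reflect_lborel[where a=0]) (simp only: normal_density_reflect, simp)
qed

text \<open>The substitutions \<open>v = \<Delta> + k - d\<close> on \<open>d > k\<close> and \<open>v = \<Delta> - k - d\<close> on \<open>d < -k\<close> move the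
  two clipped regions onto normal densities centred at \<open>k\<close> and \<open>-k\<close>.\<close>
lemma integral_normal_clip_reflect:
  fixes E :: "real \<Rightarrow> real"
  assumes s: "0 < s" and k: "0 \<le> k" and [measurable]: "E \<in> borel_measurable borel"
    and B: "\<And>x. \<bar>E x\<bar> \<le> B"
  shows "(\<integral>d. normal_density \<Delta> s d * E (\<Delta> - d + clip k d) \<partial>lborel) =
    (\<integral>v. normal_density k s v * E (min v \<Delta>) +
        normal_density (- k) s v * (E (max v \<Delta>) - E \<Delta>) \<partial>lborel)"
proof -
  have int: "integrable lborel (\<lambda>x. normal_density \<mu> s x * E (f x))"
    if "f \<in> borel_measurable borel" for \<mu> f
    using integrable_normal_density_mult_bounded[OF s _ B] that by simp
  have i1: "integrable lborel (\<lambda>d. normal_density \<Delta> s d * E (min (\<Delta> + k - d) \<Delta>))"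
    and i2: "integrable lborel (\<lambda>d. normal_density \<Delta> s d * E (max (\<Delta> - d - k) \<Delta>))"
    and i3: "integrable lborel (\<lambda>d. normal_density \<Delta> s d * E \<Delta>)"
    and j1: "integrable lborel (\<lambda>v. normal_density k s v * E (min v \<Delta>))"
    and j2: "integrable lborel (\<lambda>v. normal_density (- k) s v * E (max v \<Delta>))"
    and j3: "integrable lborel (\<lambda>v. normal_density (- k) s v * E \<Delta>)"
    by (rule int, measurable)+
  have "(\<integral>d. normal_density \<Delta> s d * E (\<Delta> - d + clip k d) \<partial>lborel) =
      (\<integral>d. normal_density \<Delta> s d * E (min (\<Delta> + k - d) \<Delta>) +
        normal_density \<Delta> s d * E (max (\<Delta> - d - k) \<Delta>) - normal_density \<Delta> s d * E \<Delta> \<partial>lborel)"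
    by (intro Bochner_Integration.integral_cong refl)
      (unfold clip_split[OF k, of E], simp add: algebra_simps)
  also have "\<dots> = (\<integral>d. normal_density \<Delta> s d * E (min (\<Delta> + k - d) \<Delta>) \<partial>lborel) +
      (\<integral>d. normal_density \<Delta> s d * E (max (\<Delta> - d - k) \<Delta>) \<partial>lborel) -
      (\<integral>d. normal_density \<Delta> s d * E \<Delta> \<partial>lborel)"
    using i1 i2 i3 by simp
  also have "(\<integral>d. normal_density \<Delta> s d * E (min (\<Delta> + k - d) \<Delta>) \<partial>lborel) =
      (\<integral>v. normal_density k s v * E (min v \<Delta>) \<partial>lborel)"
    by (subst integral_reflect_lborel[where a="\<Delta> + k"]) (simp add: normal_density_reflect)
  also have "(\<integral>d. normal_density \<Delta> s d * E (max (\<Delta> - d - k) \<Delta>) \<partial>lborel) =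
      (\<integral>v. normal_density (- k) s v * E (max v \<Delta>) \<partial>lborel)"
    by (subst integral_reflect_lborel[where a="\<Delta> - k"]) (simp add: normal_density_reflect)
  also have "(\<integral>d. normal_density \<Delta> s d * E \<Delta> \<partial>lborel) = (\<integral>v. normal_density (- k) s v * E \<Delta> \<partial>lborel)"
    using s by simp
  finally show ?thesis
    using j1 j2 j3 by (simp add: right_diff_distrib)
qed

lemma clip_reflect_integrand_antitone:
  fixes E :: "real \<Rightarrow> real"
  assumes k: "0 \<le> k" and E_antitone: "\<And>x y. 0 \<le> x \<Longrightarrow> x \<le> y \<Longrightarrow> E y \<le> E x"
    and \<Delta>: "0 \<le> \<Delta>1" "\<Delta>1 \<le> \<Delta>2"
  shows "normal_density k s v * E (min v \<Delta>2) + normal_density (- k) s v * (E (max v \<Delta>2) - E \<Delta>2) \<le>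
    normal_density k s v * E (min v \<Delta>1) + normal_density (- k) s v * (E (max v \<Delta>1) - E \<Delta>1)"
proof -
  have nd_le: "normal_density (- k) s v \<le> normal_density k s v" if "0 \<le> v"
    using that k by (intro normal_density_antimono) (simp add: power2_eq_square algebra_simps)
  consider "v \<le> \<Delta>1" | "\<Delta>1 < v" "v \<le> \<Delta>2" | "\<Delta>2 < v"
    by linarith
  then show ?thesis
  proof cases
    case 1
    then show ?thesis
      using \<Delta> by simp
  next
    case 2
    then have "0 \<le> (normal_density k s v - normal_density (- k) s v) * (E \<Delta>1 - E v)"
      using \<Delta> nd_le E_antitone[of \<Delta>1 v] by (intro mult_nonneg_nonneg) auto
    with 2 show ?thesis
      by (simp add: algebra_simps)
  next
    case 3
    then have "0 \<le> (normal_density k s v - normal_density (- k) s v) * (E \<Delta>1 - E \<Delta>2)"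
      using \<Delta> nd_le E_antitone[of \<Delta>1 \<Delta>2] by (intro mult_nonneg_nonneg) auto
    with 3 \<Delta> show ?thesis
      by (simp add: algebra_simps)
  qed
qed

lemma integral_normal_clip_antitone:
  fixes E :: "real \<Rightarrow> real"
  assumes s: "0 < s" and k: "0 \<le> k" and E_measurable [measurable]: "E \<in> borel_measurable borel"
    and B: "\<And>x. \<bar>E x\<bar> \<le> B" and E_antitone: "\<And>x y. 0 \<le> x \<Longrightarrow> x \<le> y \<Longrightarrow> E y \<le> E x"
    and \<Delta>: "0 \<le> \<Delta>1" "\<Delta>1 \<le> \<Delta>2"
  shows "(\<integral>d. normal_density \<Delta>2 s d * E (\<Delta>2 - d + clip k d) \<partial>lborel) \<le>
    (\<integral>d. normal_density \<Delta>1 s d * E (\<Delta>1 - d + clip k d) \<partial>lborel)"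
proof -
  have "integrable lborel (\<lambda>v. normal_density k s v * E (min v \<Delta>) +
      normal_density (- k) s v * (E (max v \<Delta>) - E \<Delta>))" for \<Delta>
  proof -
    have "\<bar>E (max v \<Delta>) - E \<Delta>\<bar> \<le> 2 * B" for v
      using B[of "max v \<Delta>"] B[of \<Delta>] by linarith
    then show ?thesis
      using B
      by (intro Bochner_Integration.integrable_add integrable_normal_density_mult_bounded[OF s]) auto
  qed
  then show ?thesis
    unfolding integral_normal_clip_reflect[OF s k E_measurable B]
    by (intro integral_mono clip_reflect_integrand_antitone[OF k E_antitone \<Delta>])
qed

lemma integral_normal_density_std:
  assumes "0 < \<sigma>"
  shows "(\<integral>x. normal_density \<mu> \<sigma> x * f x \<partial>lborel) = (\<integral>u. std_normal_density u * f (\<mu> + \<sigma> * u) \<partial>lborel)"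
  using assms lborel_integral_real_affine[where c=\<sigma> and t=\<mu>, of "\<lambda>x. normal_density \<mu> \<sigma> x * f x"]
  by (simp add: normal_density_affine_std)

lemma integral_normal_clip_regions:
  fixes E :: "real \<Rightarrow> real" and \<Delta> :: real
  assumes s: "0 < s" and k: "0 \<le> k" and [measurable]: "E \<in> borel_measurable borel"
    and B: "\<And>x. \<bar>E x\<bar> \<le> B"
  defines "a \<equiv> (- k - \<Delta>) / s" and "b \<equiv> (k - \<Delta>) / s"
  shows "(\<integral>d. normal_density \<Delta> s d * E (\<Delta> - d + clip k d) \<partial>lborel) =
    (Phi_std b - Phi_std a) * E \<Delta>
    + (LBINT u=-\<infinity>..ereal a. E (- k - s * u) * phi_std u)
    + (LBINT u=ereal b..\<infinity>. E (k - s * u) * phi_std u)"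
proof -
  define T1 where "T1 u = std_normal_density u * (indicator {a..b} u * E \<Delta>)" for u
  define T2 where "T2 u = std_normal_density u * (indicator {..<a} u * E (- k - s * u))" for u
  define T3 where "T3 u = std_normal_density u * (indicator {b<..} u * E (k - s * u))" for u
  have ab: "a \<le> b"
    using s k by (simp add: a_def b_def divide_right_mono)
  have "0 \<le> B"
    using B[of 0] by (meson abs_ge_zero order_trans)
  then have ind_bound: "\<bar>indicator A u * E x\<bar> \<le> B" for A u x
    using B[of x] by (simp add: indicator_def)
  have T_integrable: "integrable lborel T1" "integrable lborel T2" "integrable lborel T3"
    unfolding T1_def[abs_def] T2_def[abs_def] T3_def[abs_def]
    by (rule integrable_normal_density_mult_bounded[OF zero_less_one _ ind_bound], measurable)+
  have "(\<integral>d. normal_density \<Delta> s d * E (\<Delta> - d + clip k d) \<partial>lborel) = (\<integral>u. T1 u + T2 u + T3 u \<partial>lborel)"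
  proof (subst integral_normal_density_std[OF s], intro Bochner_Integration.integral_cong refl)
    fix u
    have "u < a \<longleftrightarrow> \<Delta> + s * u < - k" "b < u \<longleftrightarrow> k < \<Delta> + s * u"
      using s by (auto simp: a_def b_def field_simps)
    then show "std_normal_density u * E (\<Delta> - (\<Delta> + s * u) + clip k (\<Delta> + s * u)) = T1 u + T2 u + T3 u"
      using k ab by (auto simp: T1_def T2_def T3_def clip_def algebra_simps indicator_def)
  qed
  also have "\<dots> = (\<integral>u. T1 u \<partial>lborel) + (\<integral>u. T2 u \<partial>lborel) + (\<integral>u. T3 u \<partial>lborel)"
    using T_integrable by simp
  also have "(\<integral>u. T1 u \<partial>lborel) = (Phi_std b - Phi_std a) * E \<Delta>"
    unfolding T1_def using integral_normal_density_interval[of 1 a b 0] ab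
    by (simp add: mult.assoc[symmetric])
  finally show ?thesis
    by (simp add: T2_def T3_def phi_std_def interval_lebesgue_integral_le_eq set_lebesgue_integral_def
        mult_ac)
qed

section \<open>The coverage probability as an integral\<close>

definition shrink_wt :: "real \<Rightarrow> real \<Rightarrow> real" where
  "shrink_wt s0 s1 = s0\<^sup>2 / (s0\<^sup>2 + s1\<^sup>2)"

definition cond_sd :: "real \<Rightarrow> real \<Rightarrow> real" where
  "cond_sd s0 s1 = s0 * s1 / sig s0 s1"

lemma sig_pos: "0 < s0 \<Longrightarrow> 0 < s1 \<Longrightarrow> 0 < sig s0 s1"
  by (simp add: sig_def add_pos_pos)

lemma cond_sd_pos: "0 < s0 \<Longrightarrow> 0 < s1 \<Longrightarrow> 0 < cond_sd s0 s1"
  by (simp add: cond_sd_def sig_pos)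

lemma gam_params:
  assumes "0 < s0" "0 < s1"
  shows "sig s0 s1 = s1 * sqrt (1 + gam s0 s1)"
    and "cond_sd s0 s1 = s0 / sqrt (1 + gam s0 s1)"
    and "shrink_wt s0 s1 = gam s0 s1 / (1 + gam s0 s1)"
    and "sqrt (gam s0 s1) = s0 / s1"
proof -
  have "1 + gam s0 s1 = (s0\<^sup>2 + s1\<^sup>2) / s1\<^sup>2"
    using assms by (simp add: gam_def field_simps)
  then have sqrt_1g: "sqrt (1 + gam s0 s1) = sig s0 s1 / s1"
    using assms by (simp add: sig_def real_sqrt_divide)
  show "sig s0 s1 = s1 * sqrt (1 + gam s0 s1)" "cond_sd s0 s1 = s0 / sqrt (1 + gam s0 s1)"
    using assms sig_pos[OF assms] by (simp_all add: sqrt_1g cond_sd_def)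
  show "shrink_wt s0 s1 = gam s0 s1 / (1 + gam s0 s1)"
    using assms by (simp add: shrink_wt_def gam_def field_simps)
  show "sqrt (gam s0 s1) = s0 / s1"
    using assms by (simp add: gam_def real_sqrt_divide)
qed

lemma gam_ratios:
  assumes s0: "0 < s0" and s1: "0 < s1"
  defines "g \<equiv> gam s0 s1"
  shows "s0 / sig s0 s1 = sqrt (g / (1 + g))"
    and "shrink_wt s0 s1 * s0 / cond_sd s0 s1 = g / sqrt (1 + g)"
    and "shrink_wt s0 s1 * sig s0 s1 / cond_sd s0 s1 = sqrt g"
proof -
  define r where "r = sqrt (1 + g)"
  have g: "g = (s0 / s1)\<^sup>2"
    by (simp add: g_def gam_def power_divide)
  have r: "0 < r" "r\<^sup>2 = 1 + g"
    by (simp_all add: r_def g add_pos_nonneg)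
  have params: "sig s0 s1 = s1 * r" "cond_sd s0 s1 = s0 / r" "shrink_wt s0 s1 = g / r\<^sup>2" "sqrt g = s0 / s1"
    using gam_params[OF s0 s1] r by (simp_all add: r_def g_def)
  show "s0 / sig s0 s1 = sqrt (g / (1 + g))"
    using s0 s1 r by (simp add: params real_sqrt_divide r_def[symmetric])
  show "shrink_wt s0 s1 * s0 / cond_sd s0 s1 = g / sqrt (1 + g)"
    using s0 r(1) by (simp add: params r_def[symmetric] field_simps power2_eq_square)
  show "shrink_wt s0 s1 * sig s0 s1 / cond_sd s0 s1 = sqrt g"
    unfolding params using s0 s1 r(1) by (simp add: g field_simps power2_eq_square)
qed

text \<open>In the coordinates \<open>x0\<close> and \<open>d = x1 - x0\<close>, the joint density is the marginal density of
  \<open>d\<close> times the conditional density of \<open>x0\<close> given \<open>d\<close>.\<close>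
lemma normal_density_pair_factor:
  assumes s0: "0 < s0" and s1: "0 < s1"
  shows "normal_density \<tau> s0 x0 * normal_density (\<tau> + \<Delta>) s1 (x0 + d) =
    normal_density \<Delta> (sig s0 s1) d * normal_density (\<tau> - shrink_wt s0 s1 * (d - \<Delta>)) (cond_sd s0 s1) x0"
proof -
  define S where "S = s0\<^sup>2 + s1\<^sup>2"
  have S: "0 < S"
    using s0 s1 by (simp add: S_def add_pos_pos)
  have sig2: "(sig s0 s1)\<^sup>2 = S" and sd2: "(cond_sd s0 s1)\<^sup>2 = s0\<^sup>2 * s1\<^sup>2 / S"
    using S by (simp_all add: sig_def cond_sd_def S_def power_mult_distrib power_divide)
  have "sqrt (2 * pi * s0\<^sup>2) * sqrt (2 * pi * s1\<^sup>2) =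
      sqrt (2 * pi * (sig s0 s1)\<^sup>2) * sqrt (2 * pi * (cond_sd s0 s1)\<^sup>2)"
    using S by (simp add: sig2 sd2 real_sqrt_mult[symmetric] field_simps)
  moreover have "- (x0 - \<tau>)\<^sup>2 / (2 * s0\<^sup>2) + - (x0 + d - (\<tau> + \<Delta>))\<^sup>2 / (2 * s1\<^sup>2) =
      - (d - \<Delta>)\<^sup>2 / (2 * (sig s0 s1)\<^sup>2) +
      - (x0 - (\<tau> - shrink_wt s0 s1 * (d - \<Delta>)))\<^sup>2 / (2 * (cond_sd s0 s1)\<^sup>2)"
    using s0 s1 S unfolding sig2 sd2 shrink_wt_def S_def[symmetric]
    by (simp add: field_simps power2_eq_square) (simp add: S_def algebra_simps power2_eq_square)
  ultimately show ?thesis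
    unfolding normal_density_def by (simp add: exp_add[symmetric] field_simps)
qed

lemma emeasure_obs_law:
  assumes s0: "0 < s0" and s1: "0 < s1" and S [measurable]: "S \<in> sets (lborel \<Otimes>\<^sub>M lborel)"
  shows "emeasure (obs_law s0 s1 \<tau> \<Delta>) S =
    (\<integral>\<^sup>+d. \<integral>\<^sup>+x0. ennreal (normal_density \<Delta> (sig s0 s1) d) *
        (ennreal (normal_density (\<tau> - shrink_wt s0 s1 * (d - \<Delta>)) (cond_sd s0 s1) x0) *
         indicator S (x0, x0 + d)) \<partial>lborel \<partial>lborel)"
proof -
  define f where
    "f x0 x1 = ennreal (normal_density \<tau> s0 x0 * normal_density (\<tau> + \<Delta>) s1 x1) * indicator S (x0, x1)"
    for x0 x1
  have f_measurable [measurable]: "(\<lambda>(x0, x1). f x0 x1) \<in> borel_measurable (lborel \<Otimes>\<^sub>M lborel)"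
    "f x0 \<in> borel_measurable borel" for x0
    unfolding f_def by measurable
  have "emeasure (obs_law s0 s1 \<tau> \<Delta>) S = (\<integral>\<^sup>+p. f (fst p) (snd p) \<partial>(lborel \<Otimes>\<^sub>M lborel))"
    unfolding obs_law_def f_def using S by (subst emeasure_density) (auto simp: case_prod_beta)
  also have "\<dots> = (\<integral>\<^sup>+x0. \<integral>\<^sup>+x1. f x0 x1 \<partial>lborel \<partial>lborel)"
    using f_measurable by (subst lborel.nn_integral_fst[symmetric]) (auto simp: case_prod_beta)
  also have "\<dots> = (\<integral>\<^sup>+x0. \<integral>\<^sup>+d. f x0 (x0 + d) \<partial>lborel \<partial>lborel)"
  proof (rule nn_integral_cong)
    fix x0 :: real
    show "(\<integral>\<^sup>+x1. f x0 x1 \<partial>lborel) = (\<integral>\<^sup>+d. f x0 (x0 + d) \<partial>lborel)"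
      using nn_integral_real_affine[OF f_measurable(2), where c=1 and t=x0] by simp
  qed
  also have "\<dots> = (\<integral>\<^sup>+d. \<integral>\<^sup>+x0. f x0 (x0 + d) \<partial>lborel \<partial>lborel)"
    by (rule lborel_pair.Fubini') measurable
  finally show ?thesis
    by (simp add: f_def normal_density_pair_factor[OF s0 s1] ennreal_mult mult.assoc)
qed

lemma measure_obs_law_band:
  fixes h :: "real \<Rightarrow> real"
  assumes s0: "0 < s0" and s1: "0 < s1" and L: "0 \<le> L" and [measurable]: "h \<in> borel_measurable borel"
  shows "measure (obs_law s0 s1 \<tau> \<Delta>) {(x0, x1). \<bar>x0 + h (x1 - x0) - \<tau>\<bar> \<le> L * cond_sd s0 s1} =
    (\<integral>d. normal_density \<Delta> (sig s0 s1) d *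
        band_prob L ((h d - shrink_wt s0 s1 * (d - \<Delta>)) / cond_sd s0 s1) \<partial>lborel)"
proof -
  define sd where "sd = cond_sd s0 s1"
  define S where "S = {(x0, x1). \<bar>x0 + h (x1 - x0) - \<tau>\<bar> \<le> L * sd}"
  define G where
    "G d = normal_density \<Delta> (sig s0 s1) d * band_prob L ((h d - shrink_wt s0 s1 * (d - \<Delta>)) / sd)"
    for d
  have sd: "0 < sd"
    using cond_sd_pos[OF s0 s1] by (simp add: sd_def)
  have "S = {p \<in> space (lborel \<Otimes>\<^sub>M lborel). \<bar>fst p + h (snd p - fst p) - \<tau>\<bar> \<le> L * sd}"
    by (auto simp: S_def space_pair_measure)
  also have "\<dots> \<in> sets (lborel \<Otimes>\<^sub>M lborel)"
    by measurable
  finally have S_sets: "S \<in> sets (lborel \<Otimes>\<^sub>M lborel)" .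
  have G_nonneg: "0 \<le> G d" for d
    by (simp add: G_def band_prob_nonneg L)
  have "integrable lborel G"
    unfolding G_def using sig_pos[OF s0 s1] sd
    by (intro integrable_normal_density_mult_bounded[where B=1] abs_band_prob_le_1) auto
  have "emeasure (obs_law s0 s1 \<tau> \<Delta>) S = (\<integral>\<^sup>+d. ennreal (G d) \<partial>lborel)"
  proof (unfold emeasure_obs_law[OF s0 s1 S_sets], rule nn_integral_cong)
    fix d
    let ?\<mu> = "\<tau> - shrink_wt s0 s1 * (d - \<Delta>)" and ?t = "\<tau> - h d"
    have "indicator S (x0, x0 + d) = (indicator {?t - L * sd..?t + L * sd} x0 :: ennreal)" for x0
      by (auto simp: S_def split: split_indicator)
    moreover have "(?\<mu> - ?t) / sd = (h d - shrink_wt s0 s1 * (d - \<Delta>)) / sd"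
      by simp
    ultimately show "(\<integral>\<^sup>+x0. ennreal (normal_density \<Delta> (sig s0 s1) d) *
        (ennreal (normal_density ?\<mu> (cond_sd s0 s1) x0) * indicator S (x0, x0 + d)) \<partial>lborel) = ennreal (G d)"
      using sd L by (simp add: nn_integral_cmult nn_integral_normal_density_band G_def ennreal_mult
          band_prob_nonneg flip: sd_def)
  qed
  also have "\<dots> = ennreal (\<integral>d. G d \<partial>lborel)"
    by (rule nn_integral_eq_integral) (simp_all add: \<open>integrable lborel G\<close> G_nonneg)
  finally have "measure (obs_law s0 s1 \<tau> \<Delta>) S = (\<integral>d. G d \<partial>lborel)"
    by (simp add: measure_def integral_nonneg_AE G_nonneg)
  then show ?thesis
    by (simp add: S_def G_def sd_def)
qed

lemma tau_ST_eq_clip: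
  assumes "0 < s0" "0 < s1" "0 \<le> crit (\<alpha> / 2)"
  shows "tau_ST s0 s1 \<alpha> x0 x1 = x0 + shrink_wt s0 s1 * clip (sig s0 s1 * crit (\<alpha> / 2)) (x1 - x0)"
proof -
  have "0 \<le> sig s0 s1 * crit (\<alpha> / 2)"
    using assms sig_pos[of s0 s1] by simp
  then show ?thesis
    using assms unfolding tau_ST_def Let_def gam_params(3)[OF assms(1,2)] clip_def
    by (cases "x1 - x0 > 0") (auto simp: sgn_if algebra_simps)
qed

definition st_coverage :: "real \<Rightarrow> real \<Rightarrow> real \<Rightarrow> real \<Rightarrow> real \<Rightarrow> real" where
  "st_coverage s0 s1 k \<Delta> L = (\<integral>d. normal_density \<Delta> (sig s0 s1) d *
     band_prob L (shrink_wt s0 s1 * (\<Delta> - d + clip k d) / cond_sd s0 s1) \<partial>lborel)"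

lemma cov_ST_eq_st_coverage:
  assumes s0: "0 < s0" and s1: "0 < s1" and L: "0 \<le> L" and c: "0 \<le> crit (\<alpha> / 2)"
  shows "cov_ST s0 s1 \<alpha> \<tau> \<Delta> L = st_coverage s0 s1 (sig s0 s1 * crit (\<alpha> / 2)) \<Delta> L"
proof -
  have halfwidth: "L * (1 + gam s0 s1) powr (-1/2) * s0 = L * cond_sd s0 s1"
    by (simp add: gam_params(2)[OF s0 s1] powr_minus_divide powr_half_sqrt add_nonneg_nonneg gam_def)
  have "cov_ST s0 s1 \<alpha> \<tau> \<Delta> L = (\<integral>d. normal_density \<Delta> (sig s0 s1) d * band_prob L
      ((shrink_wt s0 s1 * clip (sig s0 s1 * crit (\<alpha> / 2)) d - shrink_wt s0 s1 * (d - \<Delta>)) /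
        cond_sd s0 s1) \<partial>lborel)"
    unfolding cov_ST_def tau_ST_eq_clip[OF s0 s1 c] halfwidth by (rule measure_obs_law_band[OF s0 s1 L]) simp
  then show ?thesis
    unfolding st_coverage_def by (simp add: algebra_simps)
qed

lemma st_coverage_minus:
  assumes "0 \<le> k"
  shows "st_coverage s0 s1 k (- \<Delta>) L = st_coverage s0 s1 k \<Delta> L"
  unfolding st_coverage_def
  using integral_normal_clip_minus[OF assms, of "\<lambda>x. band_prob L (shrink_wt s0 s1 * x / cond_sd s0 s1)"]
  by (simp add: band_prob_minus[of L "shrink_wt s0 s1 * _ / cond_sd s0 s1", simplified])

lemma st_coverage_antitone:
  assumes s0: "0 < s0" and s1: "0 < s1" and k: "0 \<le> k" and L: "0 \<le> L" and \<Delta>: "\<bar>\<Delta>1\<bar> \<le> \<bar>\<Delta>2\<bar>"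
  shows "st_coverage s0 s1 k \<Delta>2 L \<le> st_coverage s0 s1 k \<Delta>1 L"
proof -
  have abs_eq: "st_coverage s0 s1 k \<bar>\<Delta>\<bar> L = st_coverage s0 s1 k \<Delta> L" for \<Delta>
    using st_coverage_minus[OF k] by (cases "0 \<le> \<Delta>") auto
  have "band_prob L (shrink_wt s0 s1 * y / cond_sd s0 s1) \<le> band_prob L (shrink_wt s0 s1 * x / cond_sd s0 s1)"
    if "0 \<le> x" "x \<le> y" for x y
    using that cond_sd_pos[OF s0 s1]
    by (intro band_prob_antimono L) (auto simp: shrink_wt_def intro!: divide_right_mono mult_left_mono)
  then have "st_coverage s0 s1 k \<bar>\<Delta>2\<bar> L \<le> st_coverage s0 s1 k \<bar>\<Delta>1\<bar> L"
    unfolding st_coverage_def using \<Delta> sig_pos[OF s0 s1] k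
    by (intro integral_normal_clip_antitone[where B=1] abs_band_prob_le_1) auto
  then show ?thesis
    by (simp add: abs_eq)
qed

lemma st_coverage_strict_mono:
  assumes "0 < s0" "0 < s1" "L < L'"
  shows "st_coverage s0 s1 k \<Delta> L < st_coverage s0 s1 k \<Delta> L'"
  unfolding st_coverage_def using assms sig_pos[of s0 s1]
  by (intro integral_normal_density_band_prob_strict_mono) auto

lemma st_coverage_level_root:
  assumes s0: "0 < s0" and s1: "0 < s1" and p: "0 < p" "p < 1"
  obtains L0 where "0 \<le> L0" "st_coverage s0 s1 k \<Delta> L0 = p"
proof -
  let ?H = "st_coverage s0 s1 k \<Delta>"
  note H_def = st_coverage_def[abs_def] and s = sig_pos[OF s0 s1]
  have "(?H \<longlongrightarrow> 1) at_top"
    unfolding H_def by (rule integral_normal_density_band_prob_tendsto_1[OF s]) measurable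
  then have "eventually (\<lambda>L. p < ?H L) at_top"
    using p by (intro order_tendstoD(1)) auto
  then obtain N where N: "\<And>L. N \<le> L \<Longrightarrow> p < ?H L"
    by (auto simp: eventually_at_top_linorder)
  have "continuous_on {0..max N 0} ?H"
    unfolding H_def by (rule continuous_on_integral_normal_density_band_prob[OF s]) measurable
  moreover have "?H 0 = 0"
    by (simp add: H_def band_prob_zero)
  ultimately have "\<exists>L0. 0 \<le> L0 \<and> L0 \<le> max N 0 \<and> ?H L0 = p"
    using p N[of "max N 0"] by (intro IVT') auto
  with that show ?thesis
    by blast
qed

section \<open>Coverage of the soft-thresholding interval\<close>

lemma cov_ST_minus:
  assumes "0 < s0" "0 < s1" "0 \<le> crit (\<alpha> / 2)" "0 \<le> L"
  shows "cov_ST s0 s1 \<alpha> \<tau> (- \<Delta>) L = cov_ST s0 s1 \<alpha> \<tau> \<Delta> L"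
  using assms sig_pos[of s0 s1] by (simp add: cov_ST_eq_st_coverage st_coverage_minus)

lemma cov_ST_antitone:
  assumes "0 < s0" "0 < s1" "0 \<le> crit (\<alpha> / 2)" "0 \<le> L" "\<bar>\<Delta>1\<bar> \<le> \<bar>\<Delta>2\<bar>"
  shows "cov_ST s0 s1 \<alpha> \<tau> \<Delta>2 L \<le> cov_ST s0 s1 \<alpha> \<tau> \<Delta>1 L"
  using assms sig_pos[of s0 s1] by (simp add: cov_ST_eq_st_coverage st_coverage_antitone)

lemma cov_ST_closed_form:
  fixes t :: real
  assumes s0: "0 < s0" and s1: "0 < s1" and L: "0 \<le> L" and c0: "0 \<le> crit (\<alpha> / 2)"
  defines "g \<equiv> gam s0 s1" and "c \<equiv> crit (\<alpha> / 2)"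
  shows "cov_ST s0 s1 \<alpha> \<tau> (t * s0) L =
    (Phi_std (c - sqrt (g/(1+g)) * t) - Phi_std (-c - sqrt (g/(1+g)) * t)) *
    (Phi_std (L - g / sqrt (1+g) * t) - Phi_std (-L - g / sqrt (1+g) * t))
    + (LBINT u=-\<infinity>..ereal (-c - sqrt (g/(1+g)) * t).
        (Phi_std (L + sqrt g * (u + c)) - Phi_std (-L + sqrt g * (u + c))) * phi_std u)
    + (LBINT u=ereal (c - sqrt (g/(1+g)) * t)..\<infinity>.
        (Phi_std (L + sqrt g * (u - c)) - Phi_std (-L + sqrt g * (u - c))) * phi_std u)"
proof -
  define s where "s = sig s0 s1"
  define E where "E x = band_prob L (shrink_wt s0 s1 * x / cond_sd s0 s1)" for x
  have s: "0 < s"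
    using sig_pos[OF s0 s1] by (simp add: s_def)
  have k: "0 \<le> s * c"
    using s c0 by (simp add: c_def)
  have "cov_ST s0 s1 \<alpha> \<tau> (t * s0) L =
      (\<integral>d. normal_density (t * s0) s d * E (t * s0 - d + clip (s * c) d) \<partial>lborel)"
    by (simp add: cov_ST_eq_st_coverage[OF s0 s1 L c0] st_coverage_def E_def s_def c_def)
  also have "\<dots> = (Phi_std ((s * c - t * s0) / s) - Phi_std ((- (s * c) - t * s0) / s)) * E (t * s0)
      + (LBINT u=-\<infinity>..ereal ((- (s * c) - t * s0) / s). E (- (s * c) - s * u) * phi_std u)
      + (LBINT u=ereal ((s * c - t * s0) / s)..\<infinity>. E (s * c - s * u) * phi_std u)"
    (is "_ = ?regions")
    by (rule integral_normal_clip_regions[OF s k, where B=1]) (auto simp: E_def abs_band_prob_le_1)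
  finally have "cov_ST s0 s1 \<alpha> \<tau> (t * s0) L = ?regions" .
  moreover have "(s * c - t * s0) / s = c - sqrt (g/(1+g)) * t"
    "(- (s * c) - t * s0) / s = - c - sqrt (g/(1+g)) * t"
    using s gam_ratios(1)[OF s0 s1] by (simp_all add: s_def g_def field_simps)
  moreover have "E (t * s0) = Phi_std (L - g / sqrt (1+g) * t) - Phi_std (-L - g / sqrt (1+g) * t)"
  proof -
    have "shrink_wt s0 s1 * (t * s0) / cond_sd s0 s1 = (shrink_wt s0 s1 * s0 / cond_sd s0 s1) * t"
      by simp
    then show ?thesis
      by (simp add: E_def band_prob_def gam_ratios(2)[OF s0 s1, folded g_def])
  qed
  moreover have "E (- (s * c) - s * u) = Phi_std (L + sqrt g * (u + c)) - Phi_std (-L + sqrt g * (u + c))"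
    "E (s * c - s * u) = Phi_std (L + sqrt g * (u - c)) - Phi_std (-L + sqrt g * (u - c))" for u
  proof -
    have "shrink_wt s0 s1 * (s * x) / cond_sd s0 s1 = sqrt g * x" for x
      using gam_ratios(3)[OF s0 s1, folded g_def s_def] by (metis times_divide_eq_left mult.assoc)
    then have scale: "E (s * x) = band_prob L (sqrt g * x)" for x
      by (simp add: E_def)
    have "- (s * c) - s * u = s * (- (u + c))" "s * c - s * u = s * (- (u - c))"
      by (simp_all add: algebra_simps)
    then show "E (- (s * c) - s * u) = Phi_std (L + sqrt g * (u + c)) - Phi_std (-L + sqrt g * (u + c))"
      "E (s * c - s * u) = Phi_std (L + sqrt g * (u - c)) - Phi_std (-L + sqrt g * (u - c))"
      by (simp_all only: scale) (simp_all add: band_prob_def algebra_simps)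
  qed
  ultimately show ?thesis
    by simp
qed

lemma Inf_level_set_eq_root:
  fixes F :: "'a \<Rightarrow> real \<Rightarrow> real"
  assumes "a \<in> D" and worst: "\<And>x L. x \<in> D \<Longrightarrow> 0 \<le> L \<Longrightarrow> F a L \<le> F x L"
    and strict_mono: "\<And>L L'. 0 \<le> L \<Longrightarrow> L < L' \<Longrightarrow> F a L < F a L'"
    and "0 \<le> L0" "F a L0 = p"
  shows "Inf {L. 0 \<le> L \<and> p \<le> (INF x\<in>D. F x L)} = L0"
proof -
  have "(INF x\<in>D. F x L) = F a L" if "0 \<le> L" for L
    using assms(1) worst[OF _ that] by (intro cInf_eq_minimum) auto
  moreover have "p \<le> F a L \<longleftrightarrow> L0 \<le> L" if "0 \<le> L" for L
    using strict_mono[OF assms(4), of L] strict_mono[OF that, of L0] assms(5)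
    by (cases L0 L rule: linorder_cases) auto
  ultimately have "{L. 0 \<le> L \<and> p \<le> (INF x\<in>D. F x L)} = {L0..}"
    using assms(4) by auto
  then show ?thesis
    by simp
qed

lemma cov_ST_shortest_halfwidth:
  fixes \<tau> :: real
  assumes s0: "0 < s0" and s1: "0 < s1" and c0: "0 \<le> crit (\<alpha> / 2)" and b: "0 \<le> b"
    and \<zeta>: "0 < \<zeta>" "\<zeta> < 1"
  defines "Lhat \<equiv> Inf {L. L \<ge> 0 \<and> (INF \<Delta>\<in>{\<Delta>. \<bar>\<Delta> / s0\<bar> \<le> b}. cov_ST s0 s1 \<alpha> \<tau> \<Delta> L) \<ge> 1 - \<zeta>}"
  shows "0 \<le> Lhat" and "cov_ST s0 s1 \<alpha> \<tau> (b * s0) Lhat = 1 - \<zeta>"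
    and "\<And>L. 0 \<le> L \<Longrightarrow> cov_ST s0 s1 \<alpha> \<tau> (b * s0) L = 1 - \<zeta> \<Longrightarrow> L = Lhat"
    and "\<And>\<Delta>. \<bar>\<Delta> / s0\<bar> \<le> b \<Longrightarrow> 1 - \<zeta> \<le> cov_ST s0 s1 \<alpha> \<tau> \<Delta> Lhat"
    and "\<And>L. 0 \<le> L \<Longrightarrow> L < Lhat \<Longrightarrow> \<exists>\<Delta>. \<bar>\<Delta> / s0\<bar> \<le> b \<and> cov_ST s0 s1 \<alpha> \<tau> \<Delta> L < 1 - \<zeta>"
proof -
  let ?F = "cov_ST s0 s1 \<alpha> \<tau>" and ?k = "sig s0 s1 * crit (\<alpha> / 2)"
  have cov_eq: "?F \<Delta> L = st_coverage s0 s1 ?k \<Delta> L" if "0 \<le> L" for \<Delta> L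
    by (rule cov_ST_eq_st_coverage[OF s0 s1 that c0])
  obtain L0 where "0 \<le> L0" "st_coverage s0 s1 ?k (b * s0) L0 = 1 - \<zeta>"
    using st_coverage_level_root[OF s0 s1, of "1 - \<zeta>"] \<zeta> by auto
  then have L0: "0 \<le> L0" "?F (b * s0) L0 = 1 - \<zeta>"
    by (simp_all add: cov_eq)
  have strict_mono: "?F (b * s0) L < ?F (b * s0) L'" if "0 \<le> L" "L < L'" for L L'
    using that cov_eq[of L] cov_eq[of L'] st_coverage_strict_mono[OF s0 s1 that(2)] by simp
  have worst: "?F (b * s0) L \<le> ?F \<Delta> L" if "\<bar>\<Delta> / s0\<bar> \<le> b" "0 \<le> L" for \<Delta> L
    using that s0 b by (intro cov_ST_antitone[OF s0 s1 c0]) (auto simp: abs_divide abs_mult divide_le_eq)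
  have "Lhat = L0"
    unfolding Lhat_def using s0 b worst strict_mono L0
    by (intro Inf_level_set_eq_root[where a="b * s0"]) auto
  have strict_mono_iff: "?F (b * s0) L < ?F (b * s0) L' \<longleftrightarrow> L < L'" if "0 \<le> L" "0 \<le> L'" for L L'
    using strict_mono[OF that(1), of L'] strict_mono[OF that(2), of L]
    by (cases L L' rule: linorder_cases) auto
  show "0 \<le> Lhat" "?F (b * s0) Lhat = 1 - \<zeta>"
    using L0 by (simp_all add: \<open>Lhat = L0\<close>)
  show "L = Lhat" if "0 \<le> L" "?F (b * s0) L = 1 - \<zeta>" for L
    using that L0 strict_mono_iff[of L L0] strict_mono_iff[of L0 L] \<open>Lhat = L0\<close> by auto
  show "1 - \<zeta> \<le> ?F \<Delta> Lhat" if "\<bar>\<Delta> / s0\<bar> \<le> b" for \<Delta>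
    using worst[OF that L0(1)] L0 \<open>Lhat = L0\<close> by simp
  show "\<exists>\<Delta>. \<bar>\<Delta> / s0\<bar> \<le> b \<and> ?F \<Delta> L < 1 - \<zeta>" if "0 \<le> L" "L < Lhat" for L
    using that s0 b L0 strict_mono[of L L0] \<open>Lhat = L0\<close> by (intro exI[of _ "b * s0"]) auto
qed

theorem theorem3:
  fixes s0 s1 \<alpha> :: real
  assumes s0: "s0 > 0" and s1: "s1 > 0" and \<alpha>: "0 < \<alpha>" "\<alpha> < 1"
  defines "g \<equiv> gam s0 s1" and "c \<equiv> crit (\<alpha>/2)"
  shows
    "(\<forall>\<tau> L. L > 0 \<longrightarrow>
        (\<forall>\<Delta>. cov_ST s0 s1 \<alpha> \<tau> (-\<Delta>) L = cov_ST s0 s1 \<alpha> \<tau> \<Delta> L) \<and>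
        (\<forall>\<Delta>1 \<Delta>2. \<bar>\<Delta>1\<bar> \<le> \<bar>\<Delta>2\<bar> \<longrightarrow> cov_ST s0 s1 \<alpha> \<tau> \<Delta>2 L \<le> cov_ST s0 s1 \<alpha> \<tau> \<Delta>1 L))
   \<and>
    (\<forall>\<tau> t L. L \<ge> 0 \<longrightarrow>
        cov_ST s0 s1 \<alpha> \<tau> (t * s0) L =
          (Phi_std (c - sqrt (g/(1+g)) * t) - Phi_std (-c - sqrt (g/(1+g)) * t)) *
          (Phi_std (L - g / sqrt (1+g) * t) - Phi_std (-L - g / sqrt (1+g) * t))
        + (LBINT u=-\<infinity>..ereal (-c - sqrt (g/(1+g)) * t).
              (Phi_std (L + sqrt g * (u + c)) - Phi_std (-L + sqrt g * (u + c))) * phi_std u)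
        + (LBINT u=ereal (c - sqrt (g/(1+g)) * t)..\<infinity>.
              (Phi_std (L + sqrt g * (u - c)) - Phi_std (-L + sqrt g * (u - c))) * phi_std u))
   \<and>
    (\<forall>\<tau> b \<zeta>. b \<ge> 0 \<longrightarrow> 0 < \<zeta> \<longrightarrow> \<zeta> < 1 \<longrightarrow>
       (let Lhat = Inf {L. L \<ge> 0 \<and>
                     (INF \<Delta>\<in>{\<Delta>. \<bar>\<Delta> / s0\<bar> \<le> b}. cov_ST s0 s1 \<alpha> \<tau> \<Delta> L) \<ge> 1 - \<zeta>} in
        Lhat \<ge> 0 \<and>
        cov_ST s0 s1 \<alpha> \<tau> (b * s0) Lhat = 1 - \<zeta> \<and>
        (\<forall>L. L \<ge> 0 \<longrightarrow> cov_ST s0 s1 \<alpha> \<tau> (b * s0) L = 1 - \<zeta> \<longrightarrow> L = Lhat) \<and>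
        (\<forall>\<Delta>. \<bar>\<Delta> / s0\<bar> \<le> b \<longrightarrow> cov_ST s0 s1 \<alpha> \<tau> \<Delta> Lhat \<ge> 1 - \<zeta>) \<and>
        (\<forall>L. 0 \<le> L \<longrightarrow> L < Lhat \<longrightarrow>
             (\<exists>\<Delta>. \<bar>\<Delta> / s0\<bar> \<le> b \<and> cov_ST s0 s1 \<alpha> \<tau> \<Delta> L < 1 - \<zeta>))))"
proof -
  have c0: "0 \<le> crit (\<alpha> / 2)"
    using crit_pos[of "\<alpha> / 2"] \<alpha> by simp
  note halfwidth = cov_ST_shortest_halfwidth[OF s0 s1 c0]
  show ?thesis
    unfolding Let_def g_def c_def
    using cov_ST_minus[OF s0 s1 c0] cov_ST_antitone[OF s0 s1 c0] cov_ST_closed_form[OF s0 s1 _ c0]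
      halfwidth
    by (auto simp: less_imp_le)
qed

end
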